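(* There exists a family of smooth functions $\{\chi_\delta:\mathbb{R}\to[0,1]\}_{\delta\in(0,1]}$, depending continuously on $\delta$, such that: (i) for each $\delta\in(0,1]$, $\chi_\delta$ is decreasing; (ii) for each $\delta\in(0,1]$ there exists $\eta_\delta>0$ with $\chi_\delta(x)=1$ for $x<\eta_\delta$ and $\chi_\delta(x)=0$ for $x>\frac{\pi}{2}-\eta_\delta$; (iii) $\chi_\delta\to\mathbb{1}_{\{x\le0\}}$ pointwise as $\delta\downarrow0$; (iv) $$\lim_{\delta\downarrow0}\ \sup_{r\in(0,\pi/2)}\frac{\int_0^r-\chi_\delta'(x)\sin(x)\,dx}{\sin(r)}=0.$$ *)

theory Defs
  imports "HOL-Analysis.Analysis"
begin

definition smooth_real :: "(real \<Rightarrow> real) \<Rightarrow> bool" where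
  "smooth_real f \<longleftrightarrow> (\<forall>n x. ((deriv ^^ n) f) differentiable (at x))"

end

(*
  Take a smooth step s with s = 0 on (-inf, 0] and s = 1 on [1, inf), built from exp (-1/x)
  (all of whose derivatives have the form p(1/x) exp (-1/x), so it is smooth), and put
  chi_d x = 1 - s (d ln x + 2) for x > 0 and chi_d x = 1 for x <= 0.  The transition happens
  on [exp (-2/d), exp (-1/d)], which shrinks to 0 as d -> 0.  The logarithmic scale makes
  |chi_d' x| <= d sup |s'| / x, so |chi_d' x sin x| <= d sup |s'| because sin x <= x; with
  sin r >= r/3 on (0, pi/2) the ratios in (iv) are bounded by 3 d sup |s'|.
*)

theory Submission
  imports Defs "HOL-Computational_Algebra.Polynomial"
begin

section \<open>Smooth functions on open sets\<close>

text \<open>Index shift: \<open>differentiable_upto n U f\<close> says that \<open>f\<close> is \<open>n + 1\<close> times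
  differentiable on \<open>U\<close>.\<close>
fun differentiable_upto :: "nat \<Rightarrow> real set \<Rightarrow> (real \<Rightarrow> real) \<Rightarrow> bool" where
  "differentiable_upto 0 U f \<longleftrightarrow> (\<forall>x\<in>U. f differentiable (at x))"
| "differentiable_upto (Suc n) U f \<longleftrightarrow>
     (\<forall>x\<in>U. f differentiable (at x)) \<and> differentiable_upto n U (deriv f)"

definition smooth_on :: "real set \<Rightarrow> (real \<Rightarrow> real) \<Rightarrow> bool" where
  "smooth_on U f \<longleftrightarrow> (\<forall>n. differentiable_upto n U f)"

lemma differentiable_upto_iff:
  "differentiable_upto n U f \<longleftrightarrow> (\<forall>k\<le>n. \<forall>x\<in>U. (deriv ^^ k) f differentiable (at x))"
proof (induction n arbitrary: f)
  case (Suc n)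
  have "(\<forall>k\<le>Suc n. P k) \<longleftrightarrow> P 0 \<and> (\<forall>k\<le>n. P (Suc k))" for P
    by (metis Suc_le_mono le0 not0_implies_Suc)
  then show ?case
    using Suc.IH by (simp del: funpow.simps add: funpow_Suc_right)
qed simp

lemma smooth_on_iff: "smooth_on U f \<longleftrightarrow> (\<forall>k. \<forall>x\<in>U. (deriv ^^ k) f differentiable (at x))"
  unfolding smooth_on_def differentiable_upto_iff by blast

lemma smooth_real_iff_smooth_on_UNIV: "smooth_real f \<longleftrightarrow> smooth_on UNIV f"
  unfolding smooth_real_def smooth_on_iff by blast

lemma smooth_on_Un: "smooth_on A f \<Longrightarrow> smooth_on B f \<Longrightarrow> smooth_on (A \<union> B) f"
  unfolding smooth_on_iff by blast

lemma differentiable_upto_imp_differentiable: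
  "differentiable_upto n U f \<Longrightarrow> x \<in> U \<Longrightarrow> f differentiable (at x)"
  by (cases n) auto

lemma differentiable_upto_SucD: "differentiable_upto (Suc n) U f \<Longrightarrow> differentiable_upto n U f"
  unfolding differentiable_upto_iff by auto

lemma DERIV_imp_differentiable: "DERIV f x :> D \<Longrightarrow> f differentiable (at x)"
  by (rule differentiableI[OF has_field_derivative_imp_has_derivative])

lemma differentiable_at_cong_ev:
  fixes f g :: "real \<Rightarrow> real"
  assumes "\<forall>\<^sub>F y in nhds x. f y = g y" "f differentiable (at x)"
  shows "g differentiable (at x)"
  using assms(2) DERIV_cong_ev[OF refl assms(1) refl] unfolding real_differentiable_def by blast

lemma differentiable_upto_transform:
  assumes "open U" "differentiable_upto n U f" "\<And>y. y \<in> U \<Longrightarrow> f y = g y"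
  shows "differentiable_upto n U g"
proof -
  have near: "\<forall>\<^sub>F y in nhds x. f y = g y" if "x \<in> U" for x
    using eventually_nhds_in_open[OF assms(1) that] by (rule eventually_mono) (rule assms(3))
  have "(deriv ^^ k) g differentiable (at x)" if "k \<le> n" "x \<in> U" for k x
  proof (rule differentiable_at_cong_ev)
    show "\<forall>\<^sub>F y in nhds x. (deriv ^^ k) f y = (deriv ^^ k) g y"
      using eventually_nhds_in_open[OF assms(1) \<open>x \<in> U\<close>]
      by (rule eventually_mono) (rule higher_deriv_cong_ev[OF near refl])
    show "(deriv ^^ k) f differentiable (at x)"
      using assms(2) that unfolding differentiable_upto_iff by blast
  qed
  then show ?thesis unfolding differentiable_upto_iff by blast
qed

lemma differentiable_upto_add:
  assumes "open U" "differentiable_upto n U f" "differentiable_upto n U g"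
  shows "differentiable_upto n U (\<lambda>x. f x + g x)"
  using assms(2,3)
proof (induction n arbitrary: f g)
  case (Suc n)
  have f: "\<forall>x\<in>U. f differentiable (at x)" "differentiable_upto n U (deriv f)"
    and g: "\<forall>x\<in>U. g differentiable (at x)" "differentiable_upto n U (deriv g)"
    using Suc.prems by simp_all
  have "differentiable_upto n U (deriv (\<lambda>x. f x + g x))"
  proof (rule differentiable_upto_transform[OF assms(1) Suc.IH[OF f(2) g(2)]])
    fix x assume "x \<in> U"
    then have "DERIV (\<lambda>x. f x + g x) x :> deriv f x + deriv g x"
      using f(1) g(1) by (intro DERIV_add) (auto simp: DERIV_deriv_iff_real_differentiable)
    then show "deriv f x + deriv g x = deriv (\<lambda>x. f x + g x) x"
      by (rule DERIV_imp_deriv[symmetric])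
  qed
  then show ?case using f(1) g(1) by simp
qed simp

lemma differentiable_upto_mult:
  assumes "open U" "differentiable_upto n U f" "differentiable_upto n U g"
  shows "differentiable_upto n U (\<lambda>x. f x * g x)"
  using assms(2,3)
proof (induction n arbitrary: f g)
  case (Suc n)
  have f: "\<forall>x\<in>U. f differentiable (at x)" "differentiable_upto n U (deriv f)"
    and g: "\<forall>x\<in>U. g differentiable (at x)" "differentiable_upto n U (deriv g)"
    using Suc.prems by simp_all
  have "differentiable_upto n U (\<lambda>x. f x * deriv g x + deriv f x * g x)"
    using Suc.IH[OF differentiable_upto_SucD[OF Suc.prems(1)] g(2)]
      Suc.IH[OF f(2) differentiable_upto_SucD[OF Suc.prems(2)]]
    by (rule differentiable_upto_add[OF assms(1)])
  then have "differentiable_upto n U (deriv (\<lambda>x. f x * g x))"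
  proof (rule differentiable_upto_transform[OF assms(1)])
    fix x assume "x \<in> U"
    then have "DERIV (\<lambda>x. f x * g x) x :> f x * deriv g x + deriv f x * g x"
      using f(1) g(1) by (intro DERIV_mult') (auto simp: DERIV_deriv_iff_real_differentiable)
    then show "f x * deriv g x + deriv f x * g x = deriv (\<lambda>x. f x * g x) x"
      by (rule DERIV_imp_deriv[symmetric])
  qed
  then show ?case using f(1) g(1) by simp
qed simp

lemma differentiable_upto_compose:
  assumes "open U" "open V" "\<And>x. x \<in> U \<Longrightarrow> g x \<in> V"
    and "differentiable_upto n V f" "differentiable_upto n U g"
  shows "differentiable_upto n U (\<lambda>x. f (g x))"
  using assms(4,5)
proof (induction n arbitrary: f)
  case 0
  have "DERIV (\<lambda>x. f (g x)) x :> deriv f (g x) * deriv g x" if "x \<in> U" for x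
    using 0 that assms(3) by (intro DERIV_chain2) (auto simp: DERIV_deriv_iff_real_differentiable)
  then show ?case by (auto intro: DERIV_imp_differentiable)
next
  case (Suc n)
  have f: "\<forall>x\<in>V. f differentiable (at x)" "differentiable_upto n V (deriv f)"
    and g: "\<forall>x\<in>U. g differentiable (at x)" "differentiable_upto n U (deriv g)"
    using Suc.prems by simp_all
  have chain: "DERIV (\<lambda>x. f (g x)) x :> deriv f (g x) * deriv g x" if "x \<in> U" for x
    using f(1) g(1) that assms(3) by (intro DERIV_chain2) (auto simp: DERIV_deriv_iff_real_differentiable)
  have "differentiable_upto n U (\<lambda>x. deriv f (g x) * deriv g x)"
    using Suc.IH[OF f(2) differentiable_upto_SucD[OF Suc.prems(2)]] g(2)
    by (rule differentiable_upto_mult[OF assms(1)])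
  then have "differentiable_upto n U (deriv (\<lambda>x. f (g x)))"
    by (rule differentiable_upto_transform[OF assms(1)]) (rule DERIV_imp_deriv[OF chain, symmetric])
  then show ?case using chain by (auto intro: DERIV_imp_differentiable)
qed

lemma smooth_on_add: "open U \<Longrightarrow> smooth_on U f \<Longrightarrow> smooth_on U g \<Longrightarrow> smooth_on U (\<lambda>x. f x + g x)"
  unfolding smooth_on_def using differentiable_upto_add by blast

lemma smooth_on_mult: "open U \<Longrightarrow> smooth_on U f \<Longrightarrow> smooth_on U g \<Longrightarrow> smooth_on U (\<lambda>x. f x * g x)"
  unfolding smooth_on_def using differentiable_upto_mult by blast

lemma smooth_on_compose:
  "open U \<Longrightarrow> open V \<Longrightarrow> (\<And>x. x \<in> U \<Longrightarrow> g x \<in> V) \<Longrightarrow> smooth_on V f \<Longrightarrow> smooth_on U g \<Longrightarrow>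
   smooth_on U (\<lambda>x. f (g x))"
  unfolding smooth_on_def using differentiable_upto_compose by blast

lemma smooth_on_transform:
  "open U \<Longrightarrow> smooth_on U f \<Longrightarrow> (\<And>y. y \<in> U \<Longrightarrow> f y = g y) \<Longrightarrow> smooth_on U g"
  unfolding smooth_on_def using differentiable_upto_transform by blast

lemma smooth_on_deriv_closed_family:
  assumes "open U" "f \<in> F" and closed: "\<And>g. g \<in> F \<Longrightarrow> \<exists>g'\<in>F. \<forall>x\<in>U. DERIV g x :> g' x"
  shows "smooth_on U f"
proof -
  have "differentiable_upto n U g" if "g \<in> F" for n g
    using that
  proof (induction n arbitrary: g)
    case 0
    then obtain g' where "\<forall>x\<in>U. DERIV g x :> g' x" using closed by blast
    then show ?case by (auto intro: DERIV_imp_differentiable)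
  next
    case (Suc n)
    then obtain g' where g': "g' \<in> F" "\<forall>x\<in>U. DERIV g x :> g' x" using closed by blast
    have "differentiable_upto n U (deriv g)"
      by (rule differentiable_upto_transform[OF assms(1) Suc.IH[OF g'(1)]])
         (use g'(2) DERIV_imp_deriv in metis)
    then show ?case using g'(2) by (auto intro: DERIV_imp_differentiable)
  qed
  then show ?thesis using assms(2) smooth_on_def by blast
qed

lemma smooth_on_affine: "open U \<Longrightarrow> smooth_on U (\<lambda>x. a * x + b)"
proof (rule smooth_on_deriv_closed_family[where F = "{\<lambda>x. c * x + e | c e. True}"])
  fix g assume "g \<in> {\<lambda>x::real. c * x + e | c e. True}"
  then obtain c e where "g = (\<lambda>x. c * x + e)" by blast
  then have "\<forall>x\<in>U. DERIV g x :> 0 * x + c" by (auto intro!: derivative_eq_intros)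
  then show "\<exists>g'\<in>{\<lambda>x::real. c * x + e | c e. True}. \<forall>x\<in>U. DERIV g x :> g' x"
    by (rule bexI[of _ "\<lambda>x. 0 * x + c"]) blast
qed blast+

lemma smooth_on_const: "open U \<Longrightarrow> smooth_on U (\<lambda>x. c)"
  using smooth_on_affine[of U 0 c] by simp

lemma smooth_on_powr: "smooth_on {0<..} (\<lambda>x. x powr a)"
proof (rule smooth_on_deriv_closed_family[where F = "{\<lambda>x. c * x powr b | c b. True}"])
  have "(\<lambda>x::real. x powr a) = (\<lambda>x. 1 * x powr a)" by simp
  then show "(\<lambda>x::real. x powr a) \<in> {\<lambda>x. c * x powr b | c b. True}" by blast
  fix g assume "g \<in> {\<lambda>x::real. c * x powr b | c b. True}"
  then obtain c b where g: "g = (\<lambda>x. c * x powr b)" by blast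
  have "\<forall>x\<in>{0<..}. DERIV g x :> c * (b * x powr (b - 1))"
    unfolding g by (auto intro: DERIV_cmult has_real_derivative_powr)
  moreover have "(\<lambda>x. c * (b * x powr (b - 1))) = (\<lambda>x. (c * b) * x powr (b - 1))"
    by (simp add: mult.assoc)
  ultimately show "\<exists>g'\<in>{\<lambda>x::real. c * x powr b | c b. True}. \<forall>x\<in>{0<..}. DERIV g x :> g' x"
    by (intro bexI[of _ "\<lambda>x. c * (b * x powr (b - 1))"]) auto
qed simp

lemma smooth_on_inverse: "smooth_on {0<..} inverse"
  by (rule smooth_on_transform[OF _ smooth_on_powr[of "-1"]]) (auto simp: field_simps)

lemma smooth_on_ln: "smooth_on {0<..} ln"
proof -
  have "smooth_on {0<..} (deriv ln)"
    by (rule smooth_on_transform[OF _ smooth_on_inverse]) (auto intro: DERIV_imp_deriv[symmetric] DERIV_ln)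
  moreover have "\<forall>x\<in>{0::real<..}. ln differentiable (at x)"
  proof
    fix x :: real assume "x \<in> {0<..}"
    then show "ln differentiable (at x)" by (intro DERIV_imp_differentiable[OF DERIV_ln]) simp
  qed
  ultimately have "differentiable_upto (Suc n) {0<..} ln" for n
    unfolding smooth_on_def by simp
  then show ?thesis unfolding smooth_on_def using differentiable_upto_SucD by blast
qed

section \<open>The flat function and a smooth step\<close>

definition flat_poly :: "real poly \<Rightarrow> real \<Rightarrow> real" where
  "flat_poly p x = (if x > 0 then poly p (inverse x) * exp (- inverse x) else 0)"

lemma flat_poly_nonpos: "x \<le> 0 \<Longrightarrow> flat_poly p x = 0"
  by (simp add: flat_poly_def)

lemma poly_times_exp_minus_tendsto_0: "((\<lambda>y. poly p y * exp (- y)) \<longlongrightarrow> (0::real)) at_top"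
proof -
  have "poly p y * exp (- y) = (\<Sum>i\<le>degree p. coeff p i * (y ^ i / exp y))" for y :: real
    unfolding poly_altdef exp_minus by (simp add: sum_distrib_right divide_inverse mult.assoc)
  moreover have "((\<lambda>y. \<Sum>i\<le>degree p. coeff p i * (y ^ i / exp y)) \<longlongrightarrow> (0::real)) at_top"
    by (intro tendsto_null_sum tendsto_mult_right_zero tendsto_power_div_exp_0)
  ultimately show ?thesis by simp
qed

lemma flat_poly_tendsto_0: "(flat_poly p \<longlongrightarrow> 0) (at 0)"
proof -
  have "((\<lambda>x. poly p (inverse x) * exp (- inverse x)) \<longlongrightarrow> 0) (at_right 0)"
    by (rule filterlim_compose[OF poly_times_exp_minus_tendsto_0 filterlim_inverse_at_top_right])
  moreover have "\<forall>\<^sub>F x in at_right 0. poly p (inverse x) * exp (- inverse x) = flat_poly p x"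
    using eventually_at_right_less[of "0::real"] by eventually_elim (simp add: flat_poly_def)
  ultimately have "(flat_poly p \<longlongrightarrow> 0) (at_right 0)"
    by (rule Lim_transform_eventually)
  moreover have "\<forall>\<^sub>F x in at_left (0::real). x \<in> {-1<..<0}"
    by (rule eventually_at_left_real) simp
  then have "\<forall>\<^sub>F x in at_left 0. flat_poly p x = 0"
    by eventually_elim (simp add: flat_poly_def)
  then have "(flat_poly p \<longlongrightarrow> 0) (at_left 0)"
    by (rule tendsto_eventually)
  ultimately show ?thesis by (simp add: filterlim_at_split)
qed

lemma has_field_derivative_flat_poly:
  "DERIV (flat_poly p) x :> flat_poly ([:0, 0, 1:] * (p - pderiv p)) x"
proof -
  consider "x > 0" | "x < 0" | "x = 0" by linarith
  then show ?thesis
  proof cases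
    case 1
    have "DERIV (\<lambda>x. poly p (inverse x) * exp (- inverse x)) x :>
      poly (pderiv p) (inverse x) * (- (inverse x * inverse x)) * exp (- inverse x) +
      poly p (inverse x) * (exp (- inverse x) * (inverse x * inverse x))"
      using 1 by (auto intro!: derivative_eq_intros DERIV_chain2[OF poly_DERIV] simp: power2_eq_square)
    then have "DERIV (\<lambda>x. poly p (inverse x) * exp (- inverse x)) x :>
      flat_poly ([:0, 0, 1:] * (p - pderiv p)) x"
      using 1 by (simp add: flat_poly_def algebra_simps)
    then show ?thesis
      by (rule has_field_derivative_transform_within_open[where S = "{0<..}"])
         (use 1 in \<open>auto simp: flat_poly_def\<close>)
  next
    case 2
    have "DERIV (\<lambda>x. 0) x :> flat_poly ([:0, 0, 1:] * (p - pderiv p)) x"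
      using 2 by (simp add: flat_poly_nonpos)
    then show ?thesis
      by (rule has_field_derivative_transform_within_open[where S = "{..<0}"])
         (use 2 in \<open>auto simp: flat_poly_nonpos\<close>)
  next
    case 3
    have "flat_poly p h / h = flat_poly (pCons 0 p) h" for h
      by (simp add: flat_poly_def field_simps)
    then show ?thesis
      using 3 flat_poly_tendsto_0[of "pCons 0 p"] by (simp add: DERIV_def flat_poly_nonpos)
  qed
qed

lemma smooth_on_flat_poly: "smooth_on UNIV (flat_poly p)"
  by (rule smooth_on_deriv_closed_family[where F = "range flat_poly"])
     (use has_field_derivative_flat_poly in blast)+

definition flat :: "real \<Rightarrow> real" where
  "flat x = (if x > 0 then exp (- inverse x) else 0)"

lemma smooth_on_flat: "smooth_on UNIV flat"
proof -
  have "flat = flat_poly 1" by (simp add: fun_eq_iff flat_def flat_poly_def)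
  then show ?thesis using smooth_on_flat_poly[of 1] by metis
qed

lemma flat_pos: "x > 0 \<Longrightarrow> flat x > 0"
  by (simp add: flat_def)

lemma flat_nonpos: "x \<le> 0 \<Longrightarrow> flat x = 0"
  by (simp add: flat_def)

lemma flat_nonneg: "flat x \<ge> 0"
  by (simp add: flat_def)

lemma mono_flat: "mono flat"
  by (auto intro!: monoI simp: flat_def le_imp_inverse_le)

definition step :: "real \<Rightarrow> real" where
  "step t = flat t / (flat t + flat (1 - t))"

lemma step_denominator_pos: "flat t + flat (1 - t) > 0"
  using flat_pos[of t] flat_pos[of "1 - t"] flat_nonneg[of t] flat_nonneg[of "1 - t"]
  by (cases "t > 0") auto

lemma smooth_on_step: "smooth_on UNIV step"
proof -
  have "smooth_on UNIV (\<lambda>t. flat (-1 * t + 1))"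
    by (rule smooth_on_compose[OF open_UNIV open_UNIV _ smooth_on_flat smooth_on_affine]) auto
  then have denominator: "smooth_on UNIV (\<lambda>t. flat t + flat (1 - t))"
    using smooth_on_add[OF open_UNIV smooth_on_flat] by simp
  have "smooth_on UNIV (\<lambda>t. inverse (flat t + flat (1 - t)))"
    by (rule smooth_on_compose[OF open_UNIV open_greaterThan _ smooth_on_inverse denominator])
       (simp add: step_denominator_pos)
  then have "smooth_on UNIV (\<lambda>t. flat t * inverse (flat t + flat (1 - t)))"
    by (rule smooth_on_mult[OF open_UNIV smooth_on_flat])
  then show ?thesis
    by (rule smooth_on_transform[OF open_UNIV]) (simp add: step_def divide_inverse)
qed

lemma step_differentiable: "step differentiable (at t)"
  using smooth_on_step differentiable_upto_imp_differentiable unfolding smooth_on_def by blast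

lemma continuous_on_step: "continuous_on UNIV step"
  by (intro continuous_at_imp_continuous_on ballI differentiable_imp_continuous_within step_differentiable)

lemma step_nonpos: "t \<le> 0 \<Longrightarrow> step t = 0"
  by (simp add: step_def flat_nonpos)

lemma step_ge_1: "t \<ge> 1 \<Longrightarrow> step t = 1"
  using flat_pos[of t] by (simp add: step_def flat_nonpos)

lemma step_nonneg: "step t \<ge> 0"
  using step_denominator_pos[of t] flat_nonneg[of t] by (simp add: step_def)

lemma step_le_1: "step t \<le> 1"
  using step_denominator_pos[of t] flat_nonneg[of "1 - t"] by (simp add: step_def)

lemma mono_step: "mono step"
proof (rule monoI)
  fix s t :: real assume "s \<le> t"
  then have "flat s \<le> flat t" "flat (1 - t) \<le> flat (1 - s)"
    by (auto intro: monoD[OF mono_flat])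
  then have "flat s * flat (1 - t) \<le> flat t * flat (1 - s)"
    by (intro mult_mono) (auto simp: flat_nonneg)
  then show "step s \<le> step t"
    using step_denominator_pos[of s] step_denominator_pos[of t]
    by (simp add: step_def divide_simps algebra_simps)
qed

lemma deriv_step_outside_unit_interval: "t \<notin> {0..1} \<Longrightarrow> deriv step t = 0"
proof -
  assume "t \<notin> {0..1}"
  then consider "t < 0" | "t > 1" by fastforce
  then have "DERIV step t :> 0"
  proof cases
    case 1
    show ?thesis
      by (rule has_field_derivative_transform_within_open[OF DERIV_const[where k = 0], where S = "{..<0}"])
         (use 1 step_nonpos in auto)
  next
    case 2
    show ?thesis
      by (rule has_field_derivative_transform_within_open[OF DERIV_const[where k = 1], where S = "{1<..}"])
         (use 2 step_ge_1 in auto)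
  qed
  then show ?thesis by (rule DERIV_imp_deriv)
qed

lemma bounded_deriv_step: "\<exists>M. \<forall>t. \<bar>deriv step t\<bar> \<le> M"
proof -
  have "\<forall>t. deriv step differentiable (at t)"
    using smooth_on_step unfolding smooth_on_def by (metis UNIV_I differentiable_upto.simps(2))
  then have "continuous_on {0..1} (deriv step)"
    by (intro continuous_at_imp_continuous_on) (auto intro: differentiable_imp_continuous_within)
  then have "bounded (deriv step ` {0..1})"
    by (intro compact_imp_bounded compact_continuous_image) auto
  then obtain M where "M > 0" "\<And>t. t \<in> {0..1} \<Longrightarrow> \<bar>deriv step t\<bar> \<le> M"
    unfolding bounded_pos by auto
  then show ?thesis
    using deriv_step_outside_unit_interval by (metis abs_zero less_eq_real_def)
qed

section \<open>The cutoff family\<close>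

definition cutoff :: "real \<Rightarrow> real \<Rightarrow> real" where
  "cutoff d x = (if x \<le> 0 then 1 else 1 - step (d * ln x + 2))"

lemma cutoff_eq_1:
  assumes "d > 0" "x < exp (-2 / d)"
  shows "cutoff d x = 1"
proof (cases "x \<le> 0")
  case False
  then have "ln x < -2 / d"
    using assms(2) by (metis ln_exp ln_less_cancel_iff not_le exp_gt_zero)
  then have "d * ln x + 2 \<le> 0"
    using assms(1) by (simp add: field_simps)
  then show ?thesis using False by (simp add: cutoff_def step_nonpos)
qed (simp add: cutoff_def)

lemma cutoff_eq_0: "x > 0 \<Longrightarrow> 1 \<le> d * ln x + 2 \<Longrightarrow> cutoff d x = 0"
  by (simp add: cutoff_def step_ge_1)

lemma cutoff_bounds: "0 \<le> cutoff d x \<and> cutoff d x \<le> 1"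
  using step_nonneg step_le_1 by (simp add: cutoff_def)

lemma cutoff_plateaus:
  assumes "d > 0"
  shows "\<exists>\<eta>>0. (\<forall>x. x < \<eta> \<longrightarrow> cutoff d x = 1) \<and> (\<forall>x. x > pi / 2 - \<eta> \<longrightarrow> cutoff d x = 0)"
proof (intro exI[of _ "min (exp (-2 / d)) (1/2)"] conjI allI impI)
  fix x assume "x > pi / 2 - min (exp (-2 / d)) (1/2)"
  then have "x > 1" using pi_gt3 by linarith
  then show "cutoff d x = 0" using assms by (intro cutoff_eq_0) auto
qed (use assms cutoff_eq_1 in auto)

lemma antimono_cutoff:
  assumes "d \<ge> 0"
  shows "antimono (cutoff d)"
proof
  fix x y :: real assume "x \<le> y"
  show "cutoff d y \<le> cutoff d x"
  proof (cases "x \<le> 0")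
    case False
    with \<open>x \<le> y\<close> have "d * ln x + 2 \<le> d * ln y + 2"
      using assms by (simp add: mult_left_mono)
    then show ?thesis using False \<open>x \<le> y\<close> monoD[OF mono_step] by (simp add: cutoff_def)
  qed (use cutoff_bounds in \<open>simp add: cutoff_def\<close>)
qed

lemma smooth_real_cutoff:
  assumes "d > 0"
  shows "smooth_real (cutoff d)"
proof -
  have near_0: "smooth_on {..<exp (-2 / d)} (cutoff d)"
    by (rule smooth_on_transform[OF open_lessThan smooth_on_const]) (use cutoff_eq_1 assms in auto)
  have "smooth_on {0<..} (\<lambda>x. d * ln x + 2)"
    by (rule smooth_on_compose[OF open_greaterThan open_UNIV _ smooth_on_affine smooth_on_ln]) auto
  then have "smooth_on {0<..} (\<lambda>x. step (d * ln x + 2))"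
    using smooth_on_compose[OF open_greaterThan open_UNIV _ smooth_on_step] by simp
  then have "smooth_on {0<..} (\<lambda>x. 1 + (-1) * step (d * ln x + 2))"
    by (intro smooth_on_add smooth_on_mult smooth_on_const open_greaterThan)
  then have positive: "smooth_on {0<..} (cutoff d)"
    by (rule smooth_on_transform[OF open_greaterThan]) (simp add: cutoff_def)
  have "x < exp (-2 / d)" if "\<not> x > 0" for x
    using that exp_gt_zero[of "-2 / d"] by linarith
  then have "{..<exp (-2 / d)} \<union> {0<..} = UNIV"
    by auto
  then show ?thesis
    using smooth_on_Un[OF near_0 positive] by (simp add: smooth_real_iff_smooth_on_UNIV)
qed

lemma deriv_cutoff:
  assumes "x > 0"
  shows "deriv (cutoff d) x = - deriv step (d * ln x + 2) * d / x"
proof -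
  have "DERIV (\<lambda>x. d * ln x + 2) x :> d / x"
    using assms by (auto intro!: derivative_eq_intros)
  then have "DERIV (\<lambda>x. step (d * ln x + 2)) x :> deriv step (d * ln x + 2) * (d / x)"
    by (rule DERIV_chain2[OF step_differentiable[THEN DERIV_deriv_iff_real_differentiable[THEN iffD2]]])
  then have "DERIV (\<lambda>x. 1 - step (d * ln x + 2)) x :> 0 - deriv step (d * ln x + 2) * (d / x)"
    by (rule DERIV_diff[OF DERIV_const])
  then have "DERIV (cutoff d) x :> 0 - deriv step (d * ln x + 2) * (d / x)"
    by (rule has_field_derivative_transform_within_open[where S = "{0<..}"])
       (use assms in \<open>auto simp: cutoff_def\<close>)
  then have "deriv (cutoff d) x = 0 - deriv step (d * ln x + 2) * (d / x)"
    by (rule DERIV_imp_deriv)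
  also have "\<dots> = - deriv step (d * ln x + 2) * d / x"
    by simp
  finally show ?thesis .
qed

lemma abs_deriv_cutoff_times_sin_le:
  assumes "d > 0" and M: "\<And>t. \<bar>deriv step t\<bar> \<le> M"
  shows "\<bar>deriv (cutoff d) x * sin x\<bar> \<le> M * d"
proof -
  have "M \<ge> 0" using M[of 0] by linarith
  show ?thesis
  proof (cases "x > 0")
    case True
    have "\<bar>deriv (cutoff d) x * sin x\<bar> = \<bar>deriv step (d * ln x + 2)\<bar> * d * (\<bar>sin x\<bar> / x)"
      using True assms(1) by (simp add: deriv_cutoff abs_mult)
    also have "\<dots> \<le> M * d * 1"
      using True assms \<open>M \<ge> 0\<close> abs_sin_x_le_abs_x[of x] by (intro mult_mono) auto
    finally show ?thesis by simp
  next
    case False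
    then have "x < exp (-2 / d)"
      using exp_gt_zero[of "-2 / d"] by linarith
    have "DERIV (cutoff d) x :> 0"
      by (rule has_field_derivative_transform_within_open[OF DERIV_const[where k = 1], where S = "{..<exp (-2 / d)}"])
         (use \<open>x < exp (-2 / d)\<close> assms(1) cutoff_eq_1 in auto)
    then show ?thesis
      using \<open>M \<ge> 0\<close> assms(1) by (simp add: DERIV_imp_deriv)
  qed
qed

lemma sin_ge_third:
  fixes r :: real
  assumes "0 \<le> r" "r \<le> 2"
  shows "r / 3 \<le> sin r"
proof -
  have "\<bar>sin r - r\<bar> \<le> r * (r * r) / 6"
    using Maclaurin_sin_bound[of r 3] assms
    by (simp add: sin_coeff_def eval_nat_numeral fact_numeral)
  moreover have "r * r \<le> 4"
    using assms mult_mono[of r 2 r 2] by simp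
  then have "r * (r * r) \<le> 4 * r"
    using mult_right_mono[OF _ assms(1), of "r * r" 4] by (simp add: mult.assoc)
  ultimately show ?thesis unfolding abs_le_iff by linarith
qed

lemma abs_cutoff_ratio_le:
  assumes "d > 0" "\<And>t. \<bar>deriv step t\<bar> \<le> M" "0 < r" "r < pi / 2"
  shows "\<bar>integral {0..r} (\<lambda>x. - deriv (cutoff d) x * sin x) / sin r\<bar> \<le> 3 * M * d"
proof -
  have "deriv (cutoff d) differentiable (at x)" for x
    using smooth_real_cutoff[OF assms(1)] unfolding smooth_real_def
    by (metis funpow_0 funpow_Suc_right comp_apply)
  then have "continuous_on {0..r} (\<lambda>x. - deriv (cutoff d) x * sin x)"
    by (intro continuous_intros continuous_at_imp_continuous_on)
       (auto intro: differentiable_imp_continuous_within)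
  then have "norm (integral {0..r} (\<lambda>x. - deriv (cutoff d) x * sin x)) \<le> M * d * (r - 0)"
    by (rule integral_bound[rotated])
       (use assms(3) abs_deriv_cutoff_times_sin_le[OF assms(1,2)] in auto)
  moreover have "r / 3 \<le> sin r"
    using assms(3,4) pi_less_4 by (intro sin_ge_third) auto
  ultimately have "\<bar>integral {0..r} (\<lambda>x. - deriv (cutoff d) x * sin x)\<bar> / sin r \<le> (M * d * r) / (r / 3)"
    using assms(3) by (intro frac_le) auto
  moreover have "sin r > 0"
    using \<open>r / 3 \<le> sin r\<close> assms(3) by linarith
  ultimately show ?thesis using assms(3) by (simp add: abs_divide mult_ac)
qed

lemma continuous_on_cutoff_pos: "continuous_on (UNIV \<times> {0<..}) (\<lambda>(d, x). cutoff d x)"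
proof (rule continuous_on_eq)
  have "continuous_on (UNIV \<times> {0<..}) (\<lambda>p::real \<times> real. fst p * ln (snd p) + 2)"
    by (intro continuous_intros) (auto simp: mem_Times_iff)
  then have "continuous_on (UNIV \<times> {0<..}) (\<lambda>p::real \<times> real. step (fst p * ln (snd p) + 2))"
    by (rule continuous_on_compose2[OF continuous_on_step]) auto
  then show "continuous_on (UNIV \<times> {0<..}) (\<lambda>p::real \<times> real. 1 - step (fst p * ln (snd p) + 2))"
    by (intro continuous_intros)
  fix p :: "real \<times> real" assume "p \<in> UNIV \<times> {0<..}"
  then show "1 - step (fst p * ln (snd p) + 2) = (\<lambda>(d, x). cutoff d x) p"
    by (cases p) (simp add: cutoff_def)
qed

lemma continuous_on_cutoff: "continuous_on ({0<..} \<times> UNIV) (\<lambda>(d, x). cutoff d x)"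
proof -
  define V :: "(real \<times> real) set"
    where "V = ({0<..} \<times> UNIV) \<inter> (\<lambda>p. exp (-2 / fst p) - snd p) -` {0<..}"
  have "continuous_on ({0<..} \<times> UNIV) (\<lambda>p::real \<times> real. exp (-2 / fst p) - snd p)"
    by (intro continuous_intros) auto
  then have "open V"
    unfolding V_def by (rule continuous_open_preimage) (auto intro: open_Times)
  moreover have "open (UNIV \<times> {0<..} :: (real \<times> real) set)"
    by (intro open_Times) auto
  moreover have "continuous_on V (\<lambda>(d, x). cutoff d x)"
  proof (rule continuous_on_eq[OF continuous_on_const])
    fix p assume "p \<in> V"
    then show "1 = (\<lambda>(d, x). cutoff d x) p"
      by (cases p) (simp add: V_def cutoff_eq_1)
  qed
  ultimately have "continuous_on (V \<union> UNIV \<times> {0<..}) (\<lambda>(d, x). cutoff d x)"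
    using continuous_on_cutoff_pos by (rule continuous_on_open_Un)
  moreover have "{0<..} \<times> UNIV \<subseteq> V \<union> UNIV \<times> {0<..}"
  proof
    fix p :: "real \<times> real" assume p: "p \<in> {0<..} \<times> UNIV"
    show "p \<in> V \<union> UNIV \<times> {0<..}"
    proof (cases "snd p > 0")
      case False
      then have "snd p < exp (-2 / fst p)"
        using exp_gt_zero[of "-2 / fst p"] by linarith
      then show ?thesis using p by (simp add: V_def)
    qed (simp add: mem_Times_iff)
  qed
  ultimately show ?thesis by (rule continuous_on_subset)
qed

lemma cutoff_tendsto_indicator:
  "((\<lambda>d. cutoff d x) \<longlongrightarrow> (if x \<le> 0 then 1 else 0)) (at_right 0)"
proof (cases "x \<le> 0")
  case False
  have "((\<lambda>d. d * ln x + 2) \<longlongrightarrow> 2) (at_right 0)"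
    by (auto intro!: tendsto_eq_intros)
  then have "\<forall>\<^sub>F d in at_right 0. 1 < d * ln x + 2"
    by (rule order_tendstoD) simp
  then have "\<forall>\<^sub>F d in at_right 0. cutoff d x = 0"
    by eventually_elim (use False cutoff_eq_0 in auto)
  then show ?thesis using False by (simp add: tendsto_eventually)
qed (simp add: cutoff_def)

lemma tendsto_SUP_0_if_bounded:
  fixes g :: "'a \<Rightarrow> 'b \<Rightarrow> real"
  assumes "A \<noteq> {}" and bound: "\<forall>\<^sub>F d in F. \<forall>r\<in>A. \<bar>g d r\<bar> \<le> B d" and "(B \<longlongrightarrow> 0) F"
  shows "((\<lambda>d. SUP r\<in>A. g d r) \<longlongrightarrow> 0) F"
proof (rule tendsto_sandwich)
  obtain r0 where "r0 \<in> A" using assms(1) by blast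
  show "\<forall>\<^sub>F d in F. - B d \<le> (SUP r\<in>A. g d r)"
    using bound
  proof eventually_elim
    case (elim d)
    then have "bdd_above (g d ` A)"
      by (meson abs_le_D1 bdd_aboveI2)
    have "- B d \<le> g d r0"
      using elim \<open>r0 \<in> A\<close> by (auto simp: abs_le_iff)
    also have "\<dots> \<le> (SUP r\<in>A. g d r)"
      by (rule cSUP_upper[OF \<open>r0 \<in> A\<close> \<open>bdd_above (g d ` A)\<close>])
    finally show ?case .
  qed
  show "\<forall>\<^sub>F d in F. (SUP r\<in>A. g d r) \<le> B d"
    using bound
  proof eventually_elim
    case (elim d)
    then show ?case
      by (intro cSUP_least[OF assms(1)]) (auto simp: abs_le_iff)
  qed
  show "((\<lambda>d. - B d) \<longlongrightarrow> 0) F"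
    using tendsto_minus[OF assms(3)] by simp
qed (use assms(3) in simp)

theorem lemma3p2:
  "\<exists>chi :: real \<Rightarrow> real \<Rightarrow> real.
     (\<forall>d\<in>{0<..1}. smooth_real (chi d) \<and> (\<forall>x. 0 \<le> chi d x \<and> chi d x \<le> 1)) \<and>
     continuous_on ({0<..1} \<times> UNIV) (\<lambda>(d, x). chi d x) \<and>
     (\<forall>d\<in>{0<..1}. antimono (chi d)) \<and>
     (\<forall>d\<in>{0<..1}. \<exists>\<eta>>0. (\<forall>x. x < \<eta> \<longrightarrow> chi d x = 1) \<and>
                              (\<forall>x. x > pi / 2 - \<eta> \<longrightarrow> chi d x = 0)) \<and>
     (\<forall>x. ((\<lambda>d. chi d x) \<longlongrightarrow> (if x \<le> 0 then 1 else 0)) (at_right 0)) \<and>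
     (\<forall>\<^sub>F d in at_right 0.
        bdd_above ((\<lambda>r. integral {0..r} (\<lambda>x. - deriv (chi d) x * sin x) / sin r) ` {0<..<pi/2})) \<and>
     ((\<lambda>d. SUP r\<in>{0<..<pi/2}. integral {0..r} (\<lambda>x. - deriv (chi d) x * sin x) / sin r)
        \<longlongrightarrow> 0) (at_right 0)"
proof -
  obtain M where M: "\<And>t. \<bar>deriv step t\<bar> \<le> M"
    using bounded_deriv_step by blast
  let ?ratio = "\<lambda>d r. integral {0..r} (\<lambda>x. - deriv (cutoff d) x * sin x) / sin r"
  have bound: "\<forall>\<^sub>F d in at_right 0. \<forall>r\<in>{0<..<pi/2}. \<bar>?ratio d r\<bar> \<le> 3 * M * d"
    using eventually_at_right_less by eventually_elim (use abs_cutoff_ratio_le M in auto)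
  then have bdd: "\<forall>\<^sub>F d in at_right 0. bdd_above (?ratio d ` {0<..<pi/2})"
    by eventually_elim (metis (no_types, lifting) abs_le_D1 bdd_aboveI2)
  have lim: "((\<lambda>d. SUP r\<in>{0<..<pi/2}. ?ratio d r) \<longlongrightarrow> 0) (at_right 0)"
  proof (rule tendsto_SUP_0_if_bounded[OF _ bound])
    have "(1::real) \<in> {0<..<pi/2}" using pi_gt3 by auto
    then show "{0<..<pi/2} \<noteq> {}" by blast
  qed (auto intro!: tendsto_eq_intros)
  have cont: "continuous_on ({0<..1} \<times> UNIV) (\<lambda>(d, x). cutoff d x)"
    by (rule continuous_on_subset[OF continuous_on_cutoff]) auto
  show ?thesis
    using smooth_real_cutoff cutoff_bounds antimono_cutoff cutoff_plateaus cutoff_tendsto_indicator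
    by (intro exI[of _ cutoff] conjI bdd lim cont) auto
qed

end
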